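(* Let $\ell_1,\ell_2,\ell_3\in\tfrac12\mathbb{Z}_{\ge0}$ satisfy $|\ell_1-\ell_2|\le\ell_3\le\ell_1+\ell_2$ and $\ell_1+\ell_2+\ell_3\in\mathbb{Z}$, and put $n=\ell_1+\ell_2-\ell_3$. For $\rho\in\mathbb{C}$ put $q=e^{i\pi\rho}$, $$A^{\ell_1}_{n}(q)=\prod_{k=1}^{n}\frac{(1-q^{2k})\big(q^{2(\ell_1-k+1)}-q^{-2\ell_1}\big)}{1-q^2},\qquad \alpha_{n}(q)=\prod_{j=0}^{n-1}\frac{q^{-2\ell_2}-q^{2(\ell_2-j)}}{q^{2(1+\ell_1+\ell_2-n)}-q^{-2(\ell_1+\ell_2-j)}} .$$ Then, as an identity of meromorphic functions of $\rho$, $$A^{\ell_1}_{n}(q)\,\frac{\alpha_n(q)}{n!}\,S_{n}\big(1-2\ell_1\rho,\;1-2\ell_2\rho,\;\rho\big)=\frac{(2\pi i)^{n}}{n!}\prod_{k=1}^{n}\frac{\Gamma\big((\ell_1+\ell_2+\ell_3-k+2)\rho-1\big)\,\Gamma(-\rho)}{\Gamma\big((2\ell_1-k+1)\rho\big)\,\Gamma\big((2\ell_2-k+1)\rho\big)\,\Gamma(-k\rho)} .$$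
   Context: $S_n(\alpha,\beta,\gamma)$ denotes the (analytically continued) Selberg integral, i.e. the meromorphic function $$S_n(\alpha,\beta,\gamma)=\prod_{j=0}^{n-1}\frac{\Gamma(\alpha+j\gamma)\,\Gamma(\beta+j\gamma)\,\Gamma(1+(j+1)\gamma)}{\Gamma(\alpha+\beta+(n+j-1)\gamma)\,\Gamma(1+\gamma)},$$ with $S_0=1$; empty products equal $1$. *)

theory Defs
  imports "HOL-Analysis.Analysis"
begin

text \<open>Analytically continued Selberg integral, given by its Gamma-product formula
  (Gamma is the complex Gamma function; empty product = 1).\<close>
definition selberg :: "nat \<Rightarrow> complex \<Rightarrow> complex \<Rightarrow> complex \<Rightarrow> complex" where
  "selberg n a b g =
     (\<Prod>j<n. Gamma (a + of_nat j * g) * Gamma (b + of_nat j * g) * Gamma (1 + of_nat (j + 1) * g)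
             / (Gamma (a + b + of_nat (n + j - 1) * g) * Gamma (1 + g)))"

text \<open>Powers of q = exp(i pi rho): q^x := exp(i pi rho x).\<close>
definition qp :: "complex \<Rightarrow> complex \<Rightarrow> complex" where
  "qp \<rho> x = exp (\<i> * of_real pi * \<rho> * x)"

definition A_fun :: "complex \<Rightarrow> nat \<Rightarrow> complex \<Rightarrow> complex" where
  "A_fun l1 n \<rho> = (\<Prod>k=1..n. (1 - qp \<rho> (2 * of_nat k)) *
       (qp \<rho> (2 * (l1 - of_nat k + 1)) - qp \<rho> (- 2 * l1)) / (1 - qp \<rho> 2))"

definition alpha_fun :: "complex \<Rightarrow> complex \<Rightarrow> nat \<Rightarrow> complex \<Rightarrow> complex" where
  "alpha_fun l1 l2 n \<rho> = (\<Prod>j<n. (qp \<rho> (- 2 * l2) - qp \<rho> (2 * (l2 - of_nat j))) /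
       (qp \<rho> (2 * (1 + l1 + l2 - of_nat n)) - qp \<rho> (- 2 * (l1 + l2 - of_nat j))))"

end

theory Submission
  imports Defs
begin

text \<open>The identity holds factor by factor. Every q-difference is a phase times a sine,
  \<open>q\<^sup>a - q\<^sup>b = 2\<i> q\<^bsup>(a+b)/2\<^esup> sin (\<pi>\<rho>(a-b)/2)\<close>, and the reflection formula
  \<open>\<Gamma>(w) \<Gamma>(1-w) = \<pi> / sin (\<pi>w)\<close> turns each Gamma factor of the Selberg integral into the
  reciprocal of a Gamma factor on the right-hand side. All sines cancel, leaving \<open>2\<pi>\<i>\<close>
  times the phase \<open>q\<^bsup>n-1-2j\<^esup>\<close> in the \<open>j\<close>-th factor, and these phases multiply to 1.
  This works whenever finitely many multiples \<open>c\<rho>\<close> with \<open>c \<noteq> 0\<close> avoid \<open>\<int>\<close>, which is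
  the case in a punctured neighbourhood of every point.\<close>

lemma qp_add: "qp \<rho> s * qp \<rho> t = qp \<rho> (s + t)"
  unfolding qp_def by (simp add: mult_exp_exp field_simps)

lemma qp_nonzero: "qp \<rho> s \<noteq> 0"
  unfolding qp_def by simp

lemma qp_diff_eq_sin:
  assumes "s + t = 2 * a" and "(s - t) * \<rho> = 2 * w"
  shows "qp \<rho> s - qp \<rho> t = 2 * \<i> * qp \<rho> a * sin (of_real pi * w)"
proof -
  have a: "a = (s + t) / 2" and w: "w = (s - t) / 2 * \<rho>"
    using assms by (simp_all add: field_simps)
  show ?thesis
    unfolding a w qp_def sin_exp_eq by (simp add: mult_exp_exp field_simps)
qed

lemma prod_qp: "(\<Prod>j\<in>A. qp \<rho> (f j)) = qp \<rho> (\<Sum>j\<in>A. f j)"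
  unfolding qp_def by (cases "finite A") (simp_all add: exp_sum sum_distrib_left mult.assoc)

lemma sum_lessThan_centered: "(\<Sum>j<n. of_nat n - 1 - 2 * of_nat j :: 'a :: comm_ring_1) = 0"
proof -
  have "(\<Sum>j<n. 2 * of_nat j :: 'a) = of_nat n * (of_nat n - 1)"
    by (induction n) (simp_all add: algebra_simps)
  then show ?thesis
    by (simp add: sum_subtractf)
qed

lemma prod_qp_centered: "(\<Prod>j<n. qp \<rho> (of_nat n - 1 - 2 * of_nat j)) = 1"
  unfolding prod_qp sum_lessThan_centered by (simp add: qp_def)

lemma A_factor_eq_sin:
  "(1 - qp \<rho> (2 * x)) * (qp \<rho> (2 * (l - x + 1)) - qp \<rho> (- 2 * l)) / (1 - qp \<rho> 2)
   = 2 * \<i> * sin (of_real pi * (x * \<rho>)) * sin (of_real pi * ((2 * l - x + 1) * \<rho>))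
     / sin (of_real pi * \<rho>)"
proof -
  have "qp \<rho> (2 * x) - qp \<rho> 0 = 2 * \<i> * qp \<rho> x * sin (of_real pi * (x * \<rho>))"
    by (rule qp_diff_eq_sin) simp_all
  moreover have "qp \<rho> (2 * (l - x + 1)) - qp \<rho> (- 2 * l)
      = 2 * \<i> * qp \<rho> (1 - x) * sin (of_real pi * ((2 * l - x + 1) * \<rho>))"
    by (rule qp_diff_eq_sin) (simp_all add: algebra_simps)
  moreover have "qp \<rho> 2 - qp \<rho> 0 = 2 * \<i> * qp \<rho> 1 * sin (of_real pi * \<rho>)"
    by (rule qp_diff_eq_sin) simp_all
  moreover have "qp \<rho> x * qp \<rho> (1 - x) = qp \<rho> 1"
    by (simp add: qp_add)
  moreover have "qp \<rho> 0 = 1"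
    by (simp add: qp_def)
  ultimately show ?thesis
    using qp_nonzero[of \<rho> 1] by (cases "sin (of_real pi * \<rho>) = 0") (auto simp: field_simps)
qed

lemma alpha_factor_eq_sin:
  "(qp \<rho> (- 2 * l2) - qp \<rho> (2 * (l2 - x))) / (qp \<rho> (2 * (1 + l1 + l2 - m)) - qp \<rho> (- 2 * (l1 + l2 - x)))
   = - qp \<rho> (m - 1 - 2 * x) * sin (of_real pi * ((2 * l2 - x) * \<rho>))
     / sin (of_real pi * ((2 * l1 + 2 * l2 - m - x + 1) * \<rho>))"
proof -
  have "qp \<rho> (2 * (l2 - x)) - qp \<rho> (- 2 * l2) = 2 * \<i> * qp \<rho> (- x) * sin (of_real pi * ((2 * l2 - x) * \<rho>))"
    by (rule qp_diff_eq_sin) (simp_all add: algebra_simps)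
  moreover have "qp \<rho> (2 * (1 + l1 + l2 - m)) - qp \<rho> (- 2 * (l1 + l2 - x))
      = 2 * \<i> * qp \<rho> (1 - m + x) * sin (of_real pi * ((2 * l1 + 2 * l2 - m - x + 1) * \<rho>))"
    by (rule qp_diff_eq_sin) (simp_all add: algebra_simps)
  moreover have "qp \<rho> (- x) = qp \<rho> (m - 1 - 2 * x) * qp \<rho> (1 - m + x)"
    by (simp add: qp_add)
  ultimately show ?thesis
    using qp_nonzero[of \<rho> "1 - m + x"]
    by (cases "sin (of_real pi * ((2 * l1 + 2 * l2 - m - x + 1) * \<rho>)) = 0") (auto simp: field_simps)
qed

lemma Gamma_nonzero_if_notin_Ints: "z \<notin> \<int> \<Longrightarrow> Gamma z \<noteq> 0"
  using nonpos_Ints_subset_Ints by (auto simp: Gamma_eq_zero_iff)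

lemma sin_pi_nonzero_if_notin_Ints:
  fixes z :: complex
  assumes "z \<notin> \<int>"
  shows "sin (of_real pi * z) \<noteq> 0"
proof -
  have "1 - z \<notin> \<int>"
    using assms Ints_diff[of 1 "1 - z"] by auto
  then have "Gamma z * Gamma (1 - z) \<noteq> 0"
    using assms by (simp add: Gamma_nonzero_if_notin_Ints)
  then show ?thesis
    by (auto simp: Gamma_reflection_complex)
qed

lemma Gamma_one_minus_eq:
  fixes z :: complex
  assumes "z \<notin> \<int>"
  shows "Gamma (1 - z) = of_real pi / (sin (of_real pi * z) * Gamma z)"
  using Gamma_reflection_complex[of z] Gamma_nonzero_if_notin_Ints[OF assms]
    sin_pi_nonzero_if_notin_Ints[OF assms]
  by (simp add: field_simps)

lemma selberg_identity_factor:
  fixes l1 l2 l3 \<rho> :: complex and j n :: nat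
  assumes "j < n" and l3: "l3 = l1 + l2 - of_nat n"
    and "\<rho> \<notin> \<int>" and "of_nat (Suc j) * \<rho> \<notin> \<int>"
    and "(2 * l1 - of_nat j) * \<rho> \<notin> \<int>" and "(2 * l2 - of_nat j) * \<rho> \<notin> \<int>"
    and "(2 * l1 + 2 * l2 - of_nat n - of_nat j + 1) * \<rho> \<notin> \<int>"
  shows "((1 - qp \<rho> (2 * of_nat (Suc j))) *
       (qp \<rho> (2 * (l1 - of_nat (Suc j) + 1)) - qp \<rho> (- 2 * l1)) / (1 - qp \<rho> 2)) *
     ((qp \<rho> (- 2 * l2) - qp \<rho> (2 * (l2 - of_nat j))) /
       (qp \<rho> (2 * (1 + l1 + l2 - of_nat n)) - qp \<rho> (- 2 * (l1 + l2 - of_nat j)))) *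
     (Gamma ((1 - 2 * l1 * \<rho>) + of_nat j * \<rho>) * Gamma ((1 - 2 * l2 * \<rho>) + of_nat j * \<rho>)
        * Gamma (1 + of_nat (j + 1) * \<rho>)
      / (Gamma ((1 - 2 * l1 * \<rho>) + (1 - 2 * l2 * \<rho>) + of_nat (n + j - 1) * \<rho>) * Gamma (1 + \<rho>)))
   = qp \<rho> (of_nat n - 1 - 2 * of_nat j) * (2 * of_real pi * \<i> *
      (Gamma ((l1 + l2 + l3 - of_nat (Suc j) + 2) * \<rho> - 1) * Gamma (- \<rho>) /
        (Gamma ((2 * l1 - of_nat (Suc j) + 1) * \<rho>) * Gamma ((2 * l2 - of_nat (Suc j) + 1) * \<rho>)
         * Gamma (- of_nat (Suc j) * \<rho>))))"
proof -
  define x where "x = of_nat (Suc j) * \<rho>"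
  define y1 where "y1 = (2 * l1 - of_nat j) * \<rho>"
  define y2 where "y2 = (2 * l2 - of_nat j) * \<rho>"
  define w where "w = (2 * l1 + 2 * l2 - of_nat n - of_nat j + 1) * \<rho>"
  obtain m where n: "n = Suc m"
    using \<open>j < n\<close> by (cases n) auto
  have args:
    "(1 - 2 * l1 * \<rho>) + of_nat j * \<rho> = 1 - y1"
    "(1 - 2 * l2 * \<rho>) + of_nat j * \<rho> = 1 - y2"
    "1 + of_nat (j + 1) * \<rho> = 1 - (- x)"
    "(1 - 2 * l1 * \<rho>) + (1 - 2 * l2 * \<rho>) + of_nat (n + j - 1) * \<rho> = 1 - (w - 1)"
    "1 + \<rho> = 1 - (- \<rho>)"
    "(l1 + l2 + l3 - of_nat (Suc j) + 2) * \<rho> - 1 = w - 1"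
    "(2 * l1 - of_nat (Suc j) + 1) * \<rho> = y1"
    "(2 * l2 - of_nat (Suc j) + 1) * \<rho> = y2"
    "- of_nat (Suc j) * \<rho> = - x"
    by (simp_all add: x_def y1_def y2_def w_def l3 n algebra_simps)
  have A: "(1 - qp \<rho> (2 * of_nat (Suc j))) * (qp \<rho> (2 * (l1 - of_nat (Suc j) + 1)) - qp \<rho> (- 2 * l1))
      / (1 - qp \<rho> 2) = 2 * \<i> * sin (of_real pi * x) * sin (of_real pi * y1) / sin (of_real pi * \<rho>)"
    using A_factor_eq_sin[of \<rho> "of_nat (Suc j)" l1] by (simp add: x_def y1_def algebra_simps)
  have alpha: "(qp \<rho> (- 2 * l2) - qp \<rho> (2 * (l2 - of_nat j))) /
       (qp \<rho> (2 * (1 + l1 + l2 - of_nat n)) - qp \<rho> (- 2 * (l1 + l2 - of_nat j)))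
      = - qp \<rho> (of_nat n - 1 - 2 * of_nat j) * sin (of_real pi * y2) / sin (of_real pi * w)"
    unfolding y2_def w_def by (rule alpha_factor_eq_sin)
  have not_Ints: "y1 \<notin> \<int>" "y2 \<notin> \<int>" "- x \<notin> \<int>" "w - 1 \<notin> \<int>" "- \<rho> \<notin> \<int>"
    using assms Ints_add[of "w - 1" 1] by (auto simp: x_def y1_def y2_def w_def minus_in_Ints_iff)
  have sin_shift: "sin (of_real pi * (w - 1)) = - sin (of_real pi * w)"
    by (simp add: right_diff_distrib sin_diff)
  have "sin (of_real pi * x) \<noteq> 0" "sin (of_real pi * y1) \<noteq> 0" "sin (of_real pi * y2) \<noteq> 0"
      "sin (of_real pi * w) \<noteq> 0" "sin (of_real pi * \<rho>) \<noteq> 0"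
    using assms by (simp_all add: x_def y1_def y2_def w_def sin_pi_nonzero_if_notin_Ints)
  moreover have "Gamma y1 \<noteq> 0" "Gamma y2 \<noteq> 0" "Gamma (- x) \<noteq> 0" "Gamma (w - 1) \<noteq> 0"
      "Gamma (- \<rho>) \<noteq> 0"
    using not_Ints by (simp_all add: Gamma_nonzero_if_notin_Ints)
  ultimately show ?thesis
    unfolding args A alpha Gamma_one_minus_eq[OF not_Ints(1)] Gamma_one_minus_eq[OF not_Ints(2)]
      Gamma_one_minus_eq[OF not_Ints(3)] Gamma_one_minus_eq[OF not_Ints(4)]
      Gamma_one_minus_eq[OF not_Ints(5)] sin_shift
    by (simp add: field_simps)
qed

lemma eventually_mult_notin_Ints_at:
  fixes c z :: "'a :: real_normed_field"
  assumes "c \<noteq> 0"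
  shows "\<forall>\<^sub>F \<rho> in at z. c * \<rho> \<notin> \<int>"
proof -
  have "filterlim (\<lambda>\<rho>. c * \<rho>) (at (c * z)) (at z)"
    using assms unfolding filterlim_at by (auto intro!: tendsto_eq_intros simp: eventually_at_filter)
  moreover have "\<forall>\<^sub>F w in at (c * z). w \<in> - (\<int> - {c * z}) - {c * z}"
    by (intro eventually_at_in_open open_Compl closed_subset_Ints) auto
  ultimately have "\<forall>\<^sub>F \<rho> in at z. c * \<rho> \<in> - (\<int> - {c * z}) - {c * z}"
    by (rule filterlim_iff[THEN iffD1, rule_format])
  then show ?thesis
    by eventually_elim auto
qed

text \<open>At a regular point none of the Gamma factors involved has a pole and none of the
  sines produced by the reflection formula vanishes.\<close>
definition regular_point :: "complex \<Rightarrow> complex \<Rightarrow> nat \<Rightarrow> complex \<Rightarrow> bool" where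
  "regular_point l1 l2 n \<rho> \<longleftrightarrow> (\<forall>j\<in>{..<n}.
     \<rho> \<notin> \<int> \<and> of_nat (Suc j) * \<rho> \<notin> \<int> \<and>
     (2 * l1 - of_nat j) * \<rho> \<notin> \<int> \<and> (2 * l2 - of_nat j) * \<rho> \<notin> \<int> \<and>
     (2 * l1 + 2 * l2 - of_nat n - of_nat j + 1) * \<rho> \<notin> \<int>)"

lemma eventually_regular_point:
  assumes l1: "l1 = of_nat m1 / 2" and l2: "l2 = of_nat m2 / 2" and "n \<le> m1" "n \<le> m2"
  shows "\<forall>\<^sub>F \<rho> in at z. regular_point l1 l2 n \<rho>"
  unfolding regular_point_def
proof (intro eventually_ball_finite finite_lessThan ballI eventually_conj)
  fix j assume "j \<in> {..<n}"
  then have "of_nat (n + j) \<noteq> (of_nat (m1 + m2 + 1) :: complex)" "of_nat j \<noteq> (of_nat m1 :: complex)"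
      "of_nat j \<noteq> (of_nat m2 :: complex)"
    using assms(3,4) by (simp_all only: of_nat_eq_iff) auto
  then have "2 * l1 + 2 * l2 - of_nat n - of_nat j + 1 \<noteq> 0" "2 * l1 - of_nat j \<noteq> 0"
      "2 * l2 - of_nat j \<noteq> 0"
    by (auto simp: l1 l2 algebra_simps)
  then show "\<forall>\<^sub>F \<rho> in at z. (2 * l1 - of_nat j) * \<rho> \<notin> \<int>"
      "\<forall>\<^sub>F \<rho> in at z. (2 * l2 - of_nat j) * \<rho> \<notin> \<int>"
      "\<forall>\<^sub>F \<rho> in at z. (2 * l1 + 2 * l2 - of_nat n - of_nat j + 1) * \<rho> \<notin> \<int>"
    by (simp_all add: eventually_mult_notin_Ints_at)
  show "\<forall>\<^sub>F \<rho> in at z. of_nat (Suc j) * \<rho> \<notin> \<int>"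
    by (rule eventually_mult_notin_Ints_at) (simp del: of_nat_Suc)
  show "\<forall>\<^sub>F \<rho> in at z. \<rho> \<notin> \<int>"
    using eventually_mult_notin_Ints_at[of 1 z] by simp
qed

lemma selberg_identity_at_regular_point:
  fixes l1 l2 l3 \<rho> :: complex and n :: nat
  assumes l3: "l3 = l1 + l2 - of_nat n" and regular: "regular_point l1 l2 n \<rho>"
  shows "A_fun l1 n \<rho> * (alpha_fun l1 l2 n \<rho> / of_nat (fact n)) *
       selberg n (1 - 2 * l1 * \<rho>) (1 - 2 * l2 * \<rho>) \<rho>
     = (2 * of_real pi * \<i>) ^ n / of_nat (fact n) *
       (\<Prod>k=1..n. Gamma ((l1 + l2 + l3 - of_nat k + 2) * \<rho> - 1) * Gamma (- \<rho>) /
          (Gamma ((2 * l1 - of_nat k + 1) * \<rho>) * Gamma ((2 * l2 - of_nat k + 1) * \<rho>)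
           * Gamma (- of_nat k * \<rho>)))"
proof -
  define R where "R k = Gamma ((l1 + l2 + l3 - of_nat k + 2) * \<rho> - 1) * Gamma (- \<rho>) /
      (Gamma ((2 * l1 - of_nat k + 1) * \<rho>) * Gamma ((2 * l2 - of_nat k + 1) * \<rho>)
       * Gamma (- of_nat k * \<rho>))" for k :: nat
  have from_one: "{1..n} = {Suc 0..n}"
    by simp
  have "A_fun l1 n \<rho> * alpha_fun l1 l2 n \<rho> * selberg n (1 - 2 * l1 * \<rho>) (1 - 2 * l2 * \<rho>) \<rho>
      = (\<Prod>j<n. qp \<rho> (of_nat n - 1 - 2 * of_nat j) * (2 * of_real pi * \<i> * R (Suc j)))"
    unfolding A_fun_def alpha_fun_def selberg_def from_one prod.atLeast1_atMost_eq
      prod.distrib[symmetric] R_def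
    by (intro prod.cong refl selberg_identity_factor[OF _ l3]) (use regular in \<open>auto simp: regular_point_def\<close>)
  also have "\<dots> = (2 * of_real pi * \<i>) ^ n * (\<Prod>k=1..n. R k)"
    unfolding prod.distrib prod_qp_centered from_one prod.atLeast1_atMost_eq by (simp add: power_mult_distrib)
  finally show ?thesis
    unfolding R_def by (simp add: field_simps)
qed

theorem mainTheorem5:
  fixes m1 m2 m3 :: nat and l1 l2 l3 :: complex and n :: nat
  assumes "l1 = of_nat m1 / 2" and "l2 = of_nat m2 / 2" and "l3 = of_nat m3 / 2"
    and "m1 \<le> m2 + m3" and "m2 \<le> m1 + m3" and "m3 \<le> m1 + m2"
    and "even (m1 + m2 + m3)"
    and "n = (m1 + m2 - m3) div 2"
  shows "\<forall>z. \<forall>\<^sub>F \<rho> in at z.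
     A_fun l1 n \<rho> * (alpha_fun l1 l2 n \<rho> / of_nat (fact n)) *
       selberg n (1 - 2 * l1 * \<rho>) (1 - 2 * l2 * \<rho>) \<rho>
     = (2 * of_real pi * \<i>) ^ n / of_nat (fact n) *
       (\<Prod>k=1..n. Gamma ((l1 + l2 + l3 - of_nat k + 2) * \<rho> - 1) * Gamma (- \<rho>) /
          (Gamma ((2 * l1 - of_nat k + 1) * \<rho>) * Gamma ((2 * l2 - of_nat k + 1) * \<rho>)
           * Gamma (- of_nat k * \<rho>)))"
proof -
  have m1_m2: "m1 + m2 = m3 + 2 * n"
    using assms(4-8) by presburger
  then have "n \<le> m1" "n \<le> m2"
    using assms(4,5) by linarith+
  have m3: "of_nat m3 = of_nat m1 + of_nat m2 - 2 * (of_nat n :: complex)"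
    using arg_cong[OF m1_m2, of "of_nat :: nat \<Rightarrow> complex"] by simp
  have l3: "l3 = l1 + l2 - of_nat n"
    unfolding assms(1-3) m3 by (simp add: field_simps)
  show ?thesis
    using eventually_regular_point[OF assms(1,2) \<open>n \<le> m1\<close> \<open>n \<le> m2\<close>]
    by (blast intro: eventually_mono selberg_identity_at_regular_point[OF l3])
qed

end
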